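(* Let $X$ be a normed linear space, $F:X\rightrightarrows\mathbb{R}^p$ a set-valued map, $(x,y)\in\mathrm{gph}F$. Assume $F$ is Lipschitz around $x$ and $y\in\mathcal{PE}(F(x),P)$. Then $DF_\uparrow((x,y);0)\cap(-P)=\{0\}$, and for every $v\in X$ the sets $DF_\uparrow((x,y);v)$ and $DF((x,y);v)$ are $P$-bounded.
   Context: $P\subset\mathbb{R}^p$ is a closed convex pointed cone containing $0$ with nonempty interior; $F_\uparrow(x)=F(x)+P$. $\mathcal{E}(S,P)=\{y\in S:(y-P)\cap S=\{y\}\}$; contingent cone $T_S(z)=\{v:\exists h_k\to0^+,\exists v_k\to v,z+h_kv_k\in S\}$; $\mathcal{PE}(S,P)=\{y\in\mathcal{E}(S,P):T_{S+P}(y)\cap(-P)=\{0\}\}$. $F$ is Lipschitz around $x$ if there are $l>0$ and a neighborhood $\mathcal{O}$ of $x$ with $F(x_1)\subset F(x_2)+l\|x_1-x_2\|\mathbf{B}$ for $x_1,x_2\in\mathcal{O}$. The contingent derivative $DF(x,y)$ has graph $T_{\mathrm{gph}F}(x,y)$; value at $v$ written $DF((x,y);v)$. Recession cone of nonempty $S\subset\mathbb{R}^p$: $S^+=\{z:\exists h_k\to0^+,\exists y_k\in S,h_ky_k\to z\}$. $S$ is $P$-bounded if $S^+\cap(-P)=\{0\}$. *)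

theory Defs
  imports "HOL-Analysis.Analysis"
begin

definition msum :: "'a::real_vector set \<Rightarrow> 'a set \<Rightarrow> 'a set" where
  "msum A B = {a + b | a b. a \<in> A \<and> b \<in> B}"

definition ordering_cone :: "'b::euclidean_space set \<Rightarrow> bool" where
  "ordering_cone P \<longleftrightarrow> closed P \<and> convex P \<and> cone P \<and> 0 \<in> P
     \<and> P \<inter> uminus ` P = {0} \<and> interior P \<noteq> {}"

definition Fup :: "('a \<Rightarrow> 'b::euclidean_space set) \<Rightarrow> 'b set \<Rightarrow> 'a \<Rightarrow> 'b set" where
  "Fup F P x = msum (F x) P"

definition gph :: "('a \<Rightarrow> 'b set) \<Rightarrow> ('a \<times> 'b) set" where
  "gph F = {(x, y). y \<in> F x}"

definition contingent_cone :: "'a::real_normed_vector set \<Rightarrow> 'a \<Rightarrow> 'a set" where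
  "contingent_cone S z = {v. \<exists>h :: nat \<Rightarrow> real. \<exists>vs :: nat \<Rightarrow> 'a.
      (\<forall>k. h k > 0) \<and> h \<longlonglongrightarrow> 0 \<and> vs \<longlonglongrightarrow> v \<and> (\<forall>k. z + h k *\<^sub>R vs k \<in> S)}"

definition DF :: "('a::real_normed_vector \<Rightarrow> 'b::euclidean_space set) \<Rightarrow> 'a \<Rightarrow> 'b \<Rightarrow> 'a \<Rightarrow> 'b set" where
  "DF F x y v = {w. (v, w) \<in> contingent_cone (gph F) (x, y)}"

definition efficient :: "'b::euclidean_space set \<Rightarrow> 'b set \<Rightarrow> 'b set" where
  "efficient S P = {y \<in> S. {y - p | p. p \<in> P} \<inter> S = {y}}"

definition proper_efficient :: "'b::euclidean_space set \<Rightarrow> 'b set \<Rightarrow> 'b set" where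
  "proper_efficient S P = {y \<in> efficient S P.
       contingent_cone (msum S P) y \<inter> uminus ` P = {0}}"

definition lipschitz_around :: "('a::real_normed_vector \<Rightarrow> 'b::euclidean_space set) \<Rightarrow> 'a \<Rightarrow> bool" where
  "lipschitz_around F x \<longleftrightarrow> (\<exists>l > 0. \<exists>U. open U \<and> x \<in> U \<and>
      (\<forall>x1 \<in> U. \<forall>x2 \<in> U. F x1 \<subseteq> msum (F x2) (cball 0 (l * norm (x1 - x2)))))"

definition recession_cone :: "'b::euclidean_space set \<Rightarrow> 'b set" where
  "recession_cone S = {z. \<exists>h :: nat \<Rightarrow> real. \<exists>ys :: nat \<Rightarrow> 'b.
      (\<forall>k. h k > 0) \<and> h \<longlonglongrightarrow> 0 \<and> (\<forall>k. ys k \<in> S) \<and> (\<lambda>k. h k *\<^sub>R ys k) \<longlonglongrightarrow> z}"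

definition P_bounded :: "'b::euclidean_space set \<Rightarrow> 'b set \<Rightarrow> bool" where
  "P_bounded S P \<longleftrightarrow> recession_cone S \<inter> uminus ` P = {0}"

end

theory Submission imports Defs begin

(* Let K be the contingent cone of F(x) + P at y; proper efficiency of y
   says exactly that K meets -P only in 0, so it suffices to place the relevant
   recession cones inside K.
   (1) Lipschitz continuity gives, near x, the two inclusions
       F(x') <= F(x) + l|x'-x|B  and  F(x) <= F(x') + l|x'-x|B.
   (2) From the first one: every w in DF_up((x,y);v) is an "approximate tangent
       direction" of F(x) + P at y, i.e. at arbitrarily small scales h the set
       contains y + h q with |q - w| <= R, for the fixed radius R = 1 + l(|v|+1).
   (3) Rescaling kills the fixed error R: the recession cone of the set of such
       approximate tangent directions lies in K.  Hence DF_up((x,y);v), and the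
       smaller DF((x,y);v), have recession cones inside K.
   (4) From the second inclusion and compactness, DF((x,y);v) is nonempty, so these
       recession cones contain 0 and both sets are P-bounded.
   (5) DF_up((x,y);0) is a cone, hence lies in its own recession cone, hence in K. *)

lemma contingent_cone_iff:
  fixes S :: "'a::real_normed_vector set"
  shows "v \<in> contingent_cone S z \<longleftrightarrow>
    (\<forall>e>0. \<forall>d>0. \<exists>h u. 0 < h \<and> h < d \<and> dist u v < e \<and> z + h *\<^sub>R u \<in> S)"
proof
  assume "v \<in> contingent_cone S z"
  then obtain h vs where hp: "\<forall>k. h k > 0" and h0: "h \<longlonglongrightarrow> 0" and vv: "vs \<longlonglongrightarrow> v"
    and mem: "\<forall>k. z + h k *\<^sub>R vs k \<in> S"
    unfolding contingent_cone_def by blast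
  show "\<forall>e>0. \<forall>d>0. \<exists>h u. 0 < h \<and> h < d \<and> dist u v < e \<and> z + h *\<^sub>R u \<in> S"
  proof (intro allI impI)
    fix e d :: real assume "e > 0" "d > 0"
    have "eventually (\<lambda>k. h k < d \<and> dist (vs k) v < e) sequentially"
      using order_tendstoD(2)[OF h0 \<open>d > 0\<close>] tendstoD[OF vv \<open>e > 0\<close>]
      by (rule eventually_conj)
    then obtain k where "h k < d" "dist (vs k) v < e"
      by (auto simp: eventually_sequentially)
    then show "\<exists>h u. 0 < h \<and> h < d \<and> dist u v < e \<and> z + h *\<^sub>R u \<in> S"
      using hp mem by blast
  qed
next
  assume A: "\<forall>e>0. \<forall>d>0. \<exists>h u. 0 < h \<and> h < d \<and> dist u v < e \<and> z + h *\<^sub>R u \<in> S"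
  have "\<forall>k. \<exists>h u. 0 < h \<and> h < inverse (real (Suc k))
      \<and> dist u v < inverse (real (Suc k)) \<and> z + h *\<^sub>R u \<in> S"
    using A by simp
  then obtain h vs where H: "\<And>k. 0 < h k \<and> h k < inverse (real (Suc k))
      \<and> dist (vs k) v < inverse (real (Suc k)) \<and> z + h k *\<^sub>R vs k \<in> S"
    by metis
  have h0: "h \<longlonglongrightarrow> 0"
  proof (rule Lim_null_comparison[OF always_eventually LIMSEQ_inverse_real_of_nat], rule allI)
    show "norm (h k) \<le> inverse (real (Suc k))" for k using H[of k] by simp
  qed
  have "(\<lambda>k. dist (vs k) v) \<longlonglongrightarrow> 0"
  proof (rule Lim_null_comparison[OF always_eventually LIMSEQ_inverse_real_of_nat], rule allI)
    show "norm (dist (vs k) v) \<le> inverse (real (Suc k))" for k using H[of k] by simp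
  qed
  then have "vs \<longlonglongrightarrow> v" using tendsto_dist_iff by blast
  then show "v \<in> contingent_cone S z" unfolding contingent_cone_def using H h0 by blast
qed

lemma contingent_cone_scaleR:
  fixes S :: "'a::real_normed_vector set"
  assumes "v \<in> contingent_cone S z" "c > 0"
  shows "c *\<^sub>R v \<in> contingent_cone S z"
proof -
  obtain h vs where hp: "\<forall>k. h k > 0" and h0: "h \<longlonglongrightarrow> 0" and vv: "vs \<longlonglongrightarrow> v"
    and mem: "\<forall>k. z + h k *\<^sub>R vs k \<in> S"
    using assms(1) unfolding contingent_cone_def by blast
  have "(\<lambda>k. h k / c) \<longlonglongrightarrow> 0" using tendsto_divide_zero[OF h0] .
  moreover have "(\<lambda>k. c *\<^sub>R vs k) \<longlonglongrightarrow> c *\<^sub>R v" using tendsto_scaleR[OF tendsto_const vv] .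
  moreover have "\<forall>k. z + (h k / c) *\<^sub>R (c *\<^sub>R vs k) \<in> S" using mem assms(2) by simp
  ultimately show ?thesis using hp assms(2) unfolding contingent_cone_def
    by (intro CollectI exI[of _ "\<lambda>k. h k / c"] exI[of _ "\<lambda>k. c *\<^sub>R vs k"]) auto
qed

lemma zero_in_contingent_cone:
  fixes S :: "'a::real_normed_vector set"
  assumes "z \<in> S" shows "0 \<in> contingent_cone S z"
  unfolding contingent_cone_def
  by (intro CollectI exI[of _ "\<lambda>k. inverse (real (Suc k))"] exI[of _ "\<lambda>k. 0"])
     (use assms LIMSEQ_inverse_real_of_nat in auto)

lemma contingent_cone_mono: "S \<subseteq> S' \<Longrightarrow> contingent_cone S z \<subseteq> contingent_cone S' z"
  unfolding contingent_cone_def by blast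

lemma recession_cone_mono: "S \<subseteq> S' \<Longrightarrow> recession_cone S \<subseteq> recession_cone S'"
  unfolding recession_cone_def by blast

lemma zero_in_recession_cone:
  assumes "S \<noteq> {}" shows "0 \<in> recession_cone S"
proof -
  obtain s where s: "s \<in> S" using assms by blast
  have "(\<lambda>k. inverse (real (Suc k)) *\<^sub>R s) \<longlonglongrightarrow> 0 *\<^sub>R s"
    using tendsto_scaleR[OF LIMSEQ_inverse_real_of_nat tendsto_const] .
  then show ?thesis unfolding recession_cone_def
    by (intro CollectI exI[of _ "\<lambda>k. inverse (real (Suc k))"] exI[of _ "\<lambda>k. s"])
       (use s LIMSEQ_inverse_real_of_nat in auto)
qed

text \<open>A cone is contained in its recession cone: \<open>w = lim (1/k)(k w)\<close>.\<close>
lemma cone_subset_recession_cone: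
  assumes "cone C" shows "C \<subseteq> recession_cone C"
proof
  fix w assume w: "w \<in> C"
  show "w \<in> recession_cone C" unfolding recession_cone_def
  proof (intro CollectI exI[of _ "\<lambda>k. inverse (real (Suc k))"]
      exI[of _ "\<lambda>k. real (Suc k) *\<^sub>R w"] conjI allI)
    show "(\<lambda>k. inverse (real (Suc k))) \<longlonglongrightarrow> 0" by (rule LIMSEQ_inverse_real_of_nat)
    show "(\<lambda>k. inverse (real (Suc k)) *\<^sub>R real (Suc k) *\<^sub>R w) \<longlonglongrightarrow> w" by simp
    show "real (Suc k) *\<^sub>R w \<in> C" for k using assms w unfolding cone_def by simp
  qed simp
qed

lemma P_bounded_if_recession_cone_within:
  assumes "S \<noteq> {}" and "recession_cone S \<subseteq> K" and "K \<inter> uminus ` P = {0}"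
  shows "P_bounded S P"
  using assms zero_in_recession_cone[OF assms(1)] unfolding P_bounded_def by blast

lemma zero_in_DF_zero:
  assumes "y \<in> G x" shows "0 \<in> DF G x y 0"
proof -
  have "(x, y) \<in> gph G" using assms unfolding gph_def by simp
  then have "(0, 0) \<in> contingent_cone (gph G) (x, y)"
    using zero_in_contingent_cone by (fastforce simp: zero_prod_def)
  then show ?thesis unfolding DF_def by simp
qed

lemma cone_DF_zero:
  assumes "y \<in> G x" shows "cone (DF G x y 0)"
  unfolding cone_def
proof (intro ballI allI impI)
  fix w and c :: real assume w: "w \<in> DF G x y 0" and c: "c \<ge> 0"
  show "c *\<^sub>R w \<in> DF G x y 0"
  proof (cases "c = 0")
    case True
    then show ?thesis using assms by (simp add: zero_in_DF_zero)
  next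
    case False
    from w have "(0, w) \<in> contingent_cone (gph G) (x, y)" unfolding DF_def by simp
    then have "c *\<^sub>R (0, w) \<in> contingent_cone (gph G) (x, y)"
      by (rule contingent_cone_scaleR) (use False c in simp)
    then show ?thesis unfolding DF_def by simp
  qed
qed

lemma DF_subset_DF_Fup:
  assumes "0 \<in> P" shows "DF F x y v \<subseteq> DF (Fup F P) x y v"
proof -
  have "gph F \<subseteq> gph (Fup F P)"
    unfolding gph_def Fup_def msum_def using assms by force
  then show ?thesis unfolding DF_def using contingent_cone_mono by blast
qed

definition approx_tangent :: "'a::real_normed_vector set \<Rightarrow> 'a \<Rightarrow> real \<Rightarrow> 'a set" where
  "approx_tangent S z R = {w. \<forall>d>0. \<exists>h q. 0 < h \<and> h < d \<and> dist q w \<le> R \<and> z + h *\<^sub>R q \<in> S}"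

text \<open>Scaling down removes the fixed error: recession directions of the approximate
  tangent directions are genuine tangent directions.\<close>
lemma recession_cone_approx_tangent:
  fixes S :: "'b::euclidean_space set"
  assumes R: "R \<ge> 0"
  shows "recession_cone (approx_tangent S z R) \<subseteq> contingent_cone S z"
proof
  fix p assume "p \<in> recession_cone (approx_tangent S z R)"
  then obtain t ws where tp: "\<forall>k. t k > 0" and t0: "t \<longlonglongrightarrow> 0"
    and ws: "\<forall>k. ws k \<in> approx_tangent S z R" and tw: "(\<lambda>k. t k *\<^sub>R ws k) \<longlonglongrightarrow> p"
    unfolding recession_cone_def by blast
  show "p \<in> contingent_cone S z" unfolding contingent_cone_iff
  proof (intro allI impI)
    fix e d :: real assume e: "e > 0" and d: "d > 0"
    have "(\<lambda>k. t k * R) \<longlonglongrightarrow> 0 * R" using tendsto_mult[OF t0 tendsto_const] .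
    then have "eventually (\<lambda>k. t k * R < e/2) sequentially"
      using e by (intro order_tendstoD(2)) auto
    moreover have "eventually (\<lambda>k. dist (t k *\<^sub>R ws k) p < e/2) sequentially"
      using tendstoD[OF tw, of "e/2"] e by simp
    ultimately obtain k where small: "t k * R < e/2" and close: "dist (t k *\<^sub>R ws k) p < e/2"
      using eventually_conj eventually_sequentially order_refl by (metis (no_types, lifting))
    have "d * t k > 0" using d tp by simp
    then obtain h q where h: "0 < h" "h < d * t k" and q: "dist q (ws k) \<le> R"
      and mem: "z + h *\<^sub>R q \<in> S"
      using ws unfolding approx_tangent_def by blast
    have tk: "t k > 0" using tp by simp
    have "dist (t k *\<^sub>R q) p \<le> dist (t k *\<^sub>R q) (t k *\<^sub>R ws k) + dist (t k *\<^sub>R ws k) p"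
      by (rule dist_triangle)
    also have "dist (t k *\<^sub>R q) (t k *\<^sub>R ws k) = t k * dist q (ws k)"
      using tk by (simp add: dist_norm flip: scaleR_diff_right)
    also have "\<dots> \<le> t k * R" using q tk by simp
    finally have "dist (t k *\<^sub>R q) p < e" using small close by simp
    moreover have "z + (h / t k) *\<^sub>R (t k *\<^sub>R q) \<in> S" using mem tk by simp
    moreover have "0 < h / t k" "h / t k < d" using h tk by (auto simp: field_simps)
    ultimately show "\<exists>h u. 0 < h \<and> h < d \<and> dist u p < e \<and> z + h *\<^sub>R u \<in> S" by blast
  qed
qed

lemma lipschitz_around_ball:
  assumes "lipschitz_around F x"
  obtains l r where "l > 0" "r > 0"
    "\<And>x'. x' \<in> ball x r \<Longrightarrow> F x' \<subseteq> msum (F x) (cball 0 (l * norm (x' - x)))"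
    "\<And>x'. x' \<in> ball x r \<Longrightarrow> F x \<subseteq> msum (F x') (cball 0 (l * norm (x' - x)))"
proof -
  obtain l U where l: "l > 0" and U: "open U" "x \<in> U"
    and L: "\<forall>x1\<in>U. \<forall>x2\<in>U. F x1 \<subseteq> msum (F x2) (cball 0 (l * norm (x1 - x2)))"
    using assms unfolding lipschitz_around_def by blast
  obtain r where r: "r > 0" "ball x r \<subseteq> U" using U open_contains_ball by blast
  have inU: "x' \<in> U" if "x' \<in> ball x r" for x' using that r(2) by blast
  show ?thesis
  proof (rule that[OF l r(1)])
    fix x' assume "x' \<in> ball x r"
    then have x': "x' \<in> U" by (rule inU)
    then show "F x' \<subseteq> msum (F x) (cball 0 (l * norm (x' - x)))" using L U(2) by blast
    have "F x \<subseteq> msum (F x') (cball 0 (l * norm (x - x')))" using L U(2) x' by blast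
    then show "F x \<subseteq> msum (F x') (cball 0 (l * norm (x' - x)))"
      by (simp add: norm_minus_commute)
  qed
qed

lemma DF_Fup_approx_tangent:
  assumes l: "l \<ge> 0" and r: "r > 0"
    and upper: "\<And>x'. x' \<in> ball x r \<Longrightarrow> F x' \<subseteq> msum (F x) (cball 0 (l * norm (x' - x)))"
  shows "DF (Fup F P) x y v \<subseteq> approx_tangent (msum (F x) P) y (1 + l * (norm v + 1))"
proof
  fix w assume w: "w \<in> DF (Fup F P) x y v"
  show "w \<in> approx_tangent (msum (F x) P) y (1 + l * (norm v + 1))"
    unfolding approx_tangent_def
  proof (intro CollectI allI impI)
    fix d :: real assume d: "d > 0"
    have nv: "norm v + 1 > 0" by (simp add: add_nonneg_pos)
    then have pos: "min d (r / (norm v + 1)) > 0" using d r by simp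
    have "(v, w) \<in> contingent_cone (gph (Fup F P)) (x, y)" using w unfolding DF_def by simp
    from this[unfolded contingent_cone_iff, rule_format, OF zero_less_one pos]
    obtain h q where h: "0 < h" "h < min d (r / (norm v + 1))"
      and dq: "dist q (v, w) < 1" and qm: "(x, y) + h *\<^sub>R q \<in> gph (Fup F P)"
      by blast
    obtain u w' where q: "q = (u, w')" by (cases q)
    have du: "dist u v < 1" using dq q dist_fst_le[of q "(v, w)"] by simp
    have dw: "dist w' w < 1" using dq q dist_snd_le[of q "(v, w)"] by simp
    have nu: "norm u < norm v + 1"
      using du norm_triangle_ineq2[of u v] by (simp add: dist_norm)
    have "norm (h *\<^sub>R u) < r"
    proof -
      have "norm (h *\<^sub>R u) \<le> h * (norm v + 1)" using nu h by simp
      also have "\<dots> < r" using h nv by (simp add: pos_less_divide_eq)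
      finally show ?thesis .
    qed
    then have near: "x + h *\<^sub>R u \<in> ball x r" by (simp add: dist_norm)
    obtain f1 p where f1: "f1 \<in> F (x + h *\<^sub>R u)" and p: "p \<in> P" and eq1: "y + h *\<^sub>R w' = f1 + p"
      using qm q unfolding gph_def Fup_def msum_def by auto
    obtain f b where f: "f \<in> F x" and b: "norm b \<le> l * (h * norm u)" and eq2: "f1 = f + b"
      using upper[OF near] f1 h unfolding msum_def by auto
    define q' where "q' = w' - (1 / h) *\<^sub>R b"
    have "y + h *\<^sub>R q' = f + p" using eq1 eq2 h by (simp add: q'_def algebra_simps)
    then have "y + h *\<^sub>R q' \<in> msum (F x) P" using f p unfolding msum_def by blast
    moreover have "dist q' w \<le> 1 + l * (norm v + 1)"
    proof -
      have "dist q' w \<le> dist w' w + norm ((1 / h) *\<^sub>R b)"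
        unfolding q'_def dist_norm using norm_triangle_ineq4[of "w' - w" "(1 / h) *\<^sub>R b"]
        by (simp add: algebra_simps)
      also have "norm ((1 / h) *\<^sub>R b) \<le> l * norm u"
        using b h by (simp add: field_simps)
      also have "l * norm u \<le> l * (norm v + 1)" using l nu by (simp add: mult_left_mono)
      finally show ?thesis using dw by simp
    qed
    ultimately show "\<exists>h q. 0 < h \<and> h < d \<and> dist q w \<le> 1 + l * (norm v + 1)
        \<and> y + h *\<^sub>R q \<in> msum (F x) P"
      using h by auto
  qed
qed

lemma DF_from_bounded_quotients:
  fixes F :: "'a::real_normed_vector \<Rightarrow> 'b::euclidean_space set"
  assumes hp: "\<And>k. h k > 0" and h0: "h \<longlonglongrightarrow> 0" and bd: "bounded (range w)"
    and mem: "\<And>k. y + h k *\<^sub>R w k \<in> F (x + h k *\<^sub>R v)"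
  shows "DF F x y v \<noteq> {}"
proof -
  obtain w0 \<sigma> where sm: "strict_mono \<sigma>" and wl: "(w \<circ> \<sigma>) \<longlonglongrightarrow> w0"
    using bounded_imp_convergent_subsequence[OF bd] by blast
  have "(v, w0) \<in> contingent_cone (gph F) (x, y)"
    unfolding contingent_cone_def
  proof (intro CollectI exI[of _ "h \<circ> \<sigma>"] exI[of _ "\<lambda>k. (v, w (\<sigma> k))"] conjI allI)
    show "(h \<circ> \<sigma>) \<longlonglongrightarrow> 0" using LIMSEQ_subseq_LIMSEQ[OF h0 sm] .
    show "(\<lambda>k. (v, w (\<sigma> k))) \<longlonglongrightarrow> (v, w0)"
      using tendsto_Pair[OF tendsto_const wl] by (simp add: o_def)
    show "0 < (h \<circ> \<sigma>) k" for k using hp by simp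
    show "(x, y) + (h \<circ> \<sigma>) k *\<^sub>R (v, w (\<sigma> k)) \<in> gph F" for k
      using mem[of "\<sigma> k"] unfolding gph_def by simp
  qed
  then show ?thesis unfolding DF_def by blast
qed

text \<open>Lower Lipschitz estimate at \<open>x\<close>: each point of \<open>F(x)\<close> is approximated along
  \<open>x + h v\<close> with difference quotients bounded by \<open>l |v|\<close>, so \<open>DF((x,y);v)\<close> is nonempty.\<close>
lemma DF_nonempty:
  fixes F :: "'a::real_normed_vector \<Rightarrow> 'b::euclidean_space set"
  assumes r: "r > 0" and y: "y \<in> F x"
    and lower: "\<And>x'. x' \<in> ball x r \<Longrightarrow> F x \<subseteq> msum (F x') (cball 0 (l * norm (x' - x)))"
  shows "DF F x y v \<noteq> {}"
proof -
  define h where "h k = r / (norm v + 1) / real (Suc k)" for k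
  have nv: "norm v + 1 > 0" by (simp add: add_nonneg_pos)
  have hp: "h k > 0" for k using r nv by (simp add: h_def)
  have near: "x + h k *\<^sub>R v \<in> ball x r" for k
  proof -
    have "norm (h k *\<^sub>R v) = h k * norm v" using hp[of k] by simp
    also have "\<dots> < h k * (norm v + 1)" using hp[of k] by simp
    also have "\<dots> = r / real (Suc k)" using nv by (simp add: h_def)
    also have "\<dots> \<le> r" using r by (simp add: divide_le_eq mult_le_cancel_left1)
    finally show ?thesis by (simp add: dist_norm)
  qed
  have "\<exists>b. y + h k *\<^sub>R b \<in> F (x + h k *\<^sub>R v) \<and> norm b \<le> l * norm v" for k
  proof -
    from lower[OF near[of k]] y obtain f c where f: "f \<in> F (x + h k *\<^sub>R v)"
      and c: "norm c \<le> l * (h k * norm v)" and eq: "y = f + c"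
      using hp[of k] unfolding msum_def by auto
    have "y + h k *\<^sub>R (- (1 / h k) *\<^sub>R c) = f" using eq hp[of k] by simp
    moreover have "norm (- (1 / h k) *\<^sub>R c) \<le> l * norm v"
      using c hp[of k] by (simp add: field_simps)
    ultimately show ?thesis using f by metis
  qed
  then obtain w where mem: "\<And>k. y + h k *\<^sub>R w k \<in> F (x + h k *\<^sub>R v)"
    and wb: "\<And>k. norm (w k) \<le> l * norm v"
    by metis
  have "h \<longlonglongrightarrow> 0"
    using tendsto_mult[OF tendsto_const[of "r / (norm v + 1)"] LIMSEQ_inverse_real_of_nat]
    by (simp add: h_def[abs_def] divide_inverse)
  moreover have "bounded (range w)" using wb unfolding bounded_iff by blast
  ultimately show ?thesis using DF_from_bounded_quotients[of h w y F x v] hp mem by blast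
qed

theorem proposition6p6:
  fixes F :: "'a::real_normed_vector \<Rightarrow> 'b::euclidean_space set"
    and P :: "'b set" and x :: 'a and y :: 'b
  assumes "ordering_cone P"
    and "y \<in> F x"
    and "lipschitz_around F x"
    and "y \<in> proper_efficient (F x) P"
  shows "DF (Fup F P) x y 0 \<inter> uminus ` P = {0} \<and>
         (\<forall>v. P_bounded (DF (Fup F P) x y v) P \<and> P_bounded (DF F x y v) P)"
proof -
  define K where "K = contingent_cone (msum (F x) P) y"
  have K: "K \<inter> uminus ` P = {0}" using assms(4) unfolding proper_efficient_def K_def by blast
  have P0: "0 \<in> P" using assms(1) unfolding ordering_cone_def by blast
  obtain l r where l: "l > 0" and r: "r > 0"
    and upper: "\<And>x'. x' \<in> ball x r \<Longrightarrow> F x' \<subseteq> msum (F x) (cball 0 (l * norm (x' - x)))"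
    and lower: "\<And>x'. x' \<in> ball x r \<Longrightarrow> F x \<subseteq> msum (F x') (cball 0 (l * norm (x' - x)))"
    using lipschitz_around_ball[OF assms(3)] by blast
  have rc_up: "recession_cone (DF (Fup F P) x y v) \<subseteq> K" for v
  proof -
    have "1 + l * (norm v + 1) \<ge> 0" using l by simp
    then show ?thesis
      using recession_cone_mono[OF DF_Fup_approx_tangent[OF less_imp_le[OF l] r upper]]
        recession_cone_approx_tangent unfolding K_def by blast
  qed
  have ne: "DF F x y v \<noteq> {}" for v using DF_nonempty[OF r assms(2) lower] .
  have up_sub: "DF F x y v \<subseteq> DF (Fup F P) x y v" for v using DF_subset_DF_Fup[OF P0] .
  have "y \<in> Fup F P x" using assms(2) P0 unfolding Fup_def msum_def by force
  then have "DF (Fup F P) x y 0 \<subseteq> K"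
    using cone_subset_recession_cone[OF cone_DF_zero] rc_up by (meson order_trans)
  moreover have "0 \<in> DF (Fup F P) x y 0" using \<open>y \<in> Fup F P x\<close> by (rule zero_in_DF_zero)
  ultimately have "DF (Fup F P) x y 0 \<inter> uminus ` P = {0}" using K by blast
  moreover have "P_bounded (DF (Fup F P) x y v) P \<and> P_bounded (DF F x y v) P" for v
  proof
    have "DF (Fup F P) x y v \<noteq> {}" using ne up_sub by blast
    then show "P_bounded (DF (Fup F P) x y v) P"
      using rc_up K by (rule P_bounded_if_recession_cone_within)
    have "recession_cone (DF F x y v) \<subseteq> K" using recession_cone_mono[OF up_sub] rc_up by blast
    with ne show "P_bounded (DF F x y v) P" using K by (rule P_bounded_if_recession_cone_within)
  qed
  ultimately show ?thesis by blast
qed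

end
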